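(* Let $a,b\in\mathbb{M}_2$ with $0\le a,b\le 1$, $a\ne0,1$ and $b\neq 0,1$. Then $a$ and $b$ are strict, absolutely compatible and satisfy $ab\ne ba$ if, and only if, the following three properties hold: (1) $\det(a)>0$ and $\det(b)>0$; (2) $\operatorname{trace}(a)=1=\operatorname{trace}(b)$; (3) $\det(a\circ b)=0$.
   Context: $\mathbb{M}_2$ is the algebra of $2\times2$ complex matrices; $\operatorname{trace}$ is the non-normalized trace. For $x\in\mathbb{M}_2$, $|x|=(x^*x)^{1/2}$; $a\circ b=\frac12(ab+ba)$. Elements $0\le a,b\le 1$ are absolutely compatible if $|a-b|+|1-a-b|=1$. For positive $x$, $r(x)$ is its range projection. For $0\le a\le 1$: $s(a)=1-r(1-a)$ and $n(a)=1-r(a)$; a non-zero $0\le a\le 1$ is strict if $s(a)=0=n(a)$. *)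

theory Defs
  imports "HOL-Analysis.Analysis" "HOL-Library.Complex_Order"
begin

type_synonym M2 = "complex^2^2"

definition adj :: "M2 \<Rightarrow> M2" where
  "adj x = (\<chi> i j. cnj (x $ j $ i))"

definition hermitian :: "M2 \<Rightarrow> bool" where
  "hermitian x \<longleftrightarrow> adj x = x"

definition psd :: "M2 \<Rightarrow> bool" where
  "psd x \<longleftrightarrow> hermitian x \<and>
     (\<forall>v :: complex^2. 0 \<le> (\<Sum>i\<in>UNIV. \<Sum>j\<in>UNIV. cnj (v $ i) * x $ i $ j * v $ j))"

definition effect :: "M2 \<Rightarrow> bool" where
  "effect a \<longleftrightarrow> psd a \<and> psd (mat 1 - a)"

definition mabs :: "M2 \<Rightarrow> M2" where
  "mabs x = (THE y. psd y \<and> y ** y = adj x ** x)"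

definition jprod :: "M2 \<Rightarrow> M2 \<Rightarrow> M2" where
  "jprod a b = (\<chi> i j. (a ** b + b ** a) $ i $ j / 2)"

definition abs_compatible :: "M2 \<Rightarrow> M2 \<Rightarrow> bool" where
  "abs_compatible a b \<longleftrightarrow> mabs (a - b) + mabs (mat 1 - a - b) = mat 1"

definition rproj :: "M2 \<Rightarrow> M2" where
  "rproj x = (THE p. p ** p = p \<and> hermitian p \<and> range ((*v) p) = range ((*v) x))"

definition sproj :: "M2 \<Rightarrow> M2" where
  "sproj a = mat 1 - rproj (mat 1 - a)"

definition nproj :: "M2 \<Rightarrow> M2" where
  "nproj a = mat 1 - rproj a"

definition strict :: "M2 \<Rightarrow> bool" where
  "strict a \<longleftrightarrow> effect a \<and> a \<noteq> 0 \<and> sproj a = 0 \<and> nproj a = 0"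

end

theory Submission
  imports Defs
begin

(* Every Hermitian 2x2 matrix is m 1 + x\<^sub>1 \<sigma>\<^sub>x + x\<^sub>2 \<sigma>\<^sub>y + x\<^sub>3 \<sigma>\<^sub>z with m real and x \<in> \<real>\<^sup>3;
   its eigenvalues are m \<plusminus> \<parallel>x\<parallel>.  Writing a = (s, x) and b = (t, y), strictness of a means
   \<parallel>x\<parallel> < min s (1 - s), and ab \<noteq> ba means x \<times> y \<noteq> 0.  The absolute values |a - b| and
   |1 - a - b| have vector parts proportional to x - y and x + y, so for non-parallel x, y
   absolute compatibility forces both scalar parts s - t and 1 - s - t to vanish and leaves
   \<parallel>x - y\<parallel> + \<parallel>x + y\<parallel> = 1.  With u = \<parallel>x + y\<parallel>, w = \<parallel>x - y\<parallel> and s = t = 1/2 one has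
   16 det (a \<circ> b) = (1 + u\<^sup>2 - w\<^sup>2)\<^sup>2 - 4 u\<^sup>2 = (1 - u - w)(1 - u + w)(1 + u - w)(1 + u + w),
   and since u, w < 1 this vanishes iff u + w = 1; that equation in turn rules out
   parallel x, y. *)

unbundle cross3_syntax

definition bloch :: "real \<Rightarrow> real^3 \<Rightarrow> M2" where
  "bloch m x = (\<chi> i j.
     if i = 1 then (if j = 1 then Complex (m + x$3) 0 else Complex (x$1) (- x$2))
     else (if j = 1 then Complex (x$1) (x$2) else Complex (m - x$3) 0))"

lemma bloch_nth [simp]:
  "bloch m x $ 1 $ 1 = Complex (m + x$3) 0" "bloch m x $ 1 $ 2 = Complex (x$1) (- x$2)"
  "bloch m x $ 2 $ 1 = Complex (x$1) (x$2)" "bloch m x $ 2 $ 2 = Complex (m - x$3) 0"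
  by (simp_all add: bloch_def)

lemma M2_eq_iff: "(A::M2) = B \<longleftrightarrow> A$1$1 = B$1$1 \<and> A$1$2 = B$1$2 \<and> A$2$1 = B$2$1 \<and> A$2$2 = B$2$2"
  by (auto simp: vec_eq_iff forall_2)

lemma M2_mult_nth [simp]: "((A::M2) ** B) $ i $ j = A$i$1 * B$1$j + A$i$2 * B$2$j"
  by (simp add: matrix_matrix_mult_def sum_2)

lemma vec3_eq_iff: "(x::real^3) = y \<longleftrightarrow> x$1 = y$1 \<and> x$2 = y$2 \<and> x$3 = y$3"
  by (auto simp: vec_eq_iff forall_3)

lemma power2_norm_vec3: "(norm (x::real^3))\<^sup>2 = (x$1)\<^sup>2 + (x$2)\<^sup>2 + (x$3)\<^sup>2"
  unfolding power2_norm_eq_inner by (simp add: inner_vec_def sum_3 power2_eq_square)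

lemma inner_vec3: "(x::real^3) \<bullet> y = x$1 * y$1 + x$2 * y$2 + x$3 * y$3"
  by (simp add: inner_vec_def sum_3)

lemma bloch_eq_iff: "bloch m x = bloch n y \<longleftrightarrow> m = n \<and> x = y"
  by (auto simp: M2_eq_iff vec3_eq_iff complex_eq_iff)

lemma mat_1_eq_bloch: "(mat 1 :: M2) = bloch 1 0"
  by (simp add: M2_eq_iff mat_def Complex_eq)

lemma zero_eq_bloch: "(0 :: M2) = bloch 0 0"
  by (simp add: M2_eq_iff Complex_eq)

lemma bloch_add: "bloch m x + bloch n y = bloch (m + n) (x + y)"
  by (simp add: M2_eq_iff complex_eq_iff)

lemma bloch_diff: "bloch m x - bloch n y = bloch (m - n) (x - y)"
  by (simp add: M2_eq_iff complex_eq_iff)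

lemma scaleR_bloch: "r *\<^sub>R bloch m x = bloch (r * m) (r *\<^sub>R x)"
  by (simp add: M2_eq_iff complex_eq_iff algebra_simps)

lemma det_bloch: "det (bloch m x) = of_real (m\<^sup>2 - (norm x)\<^sup>2)"
  unfolding power2_norm_vec3 by (simp add: det_2 complex_eq_iff power2_eq_square algebra_simps)

lemma trace_bloch: "trace (bloch m x) = of_real (2 * m)"
  by (simp add: trace_def sum_2 complex_eq_iff)

lemma adj_bloch: "adj (bloch m x) = bloch m x"
  by (simp add: adj_def M2_eq_iff complex_eq_iff)

lemma hermitian_bloch: "hermitian (bloch m x)"
  by (simp add: hermitian_def adj_bloch)

lemma hermitian_imp_bloch:
  assumes "hermitian h"
  obtains m x where "h = bloch m x"
proof
  have e: "cnj (h$j$i) = h$i$j" for i j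
    using assms unfolding hermitian_def adj_def vec_eq_iff by auto
  show "h = bloch ((Re (h$1$1) + Re (h$2$2)) / 2)
      (vector [Re (h$2$1), Im (h$2$1), (Re (h$1$1) - Re (h$2$2)) / 2])"
    using e[of 1 1] e[of 2 2] e[of 1 2] by (simp add: M2_eq_iff complex_eq_iff field_simps)
qed

lemma bloch_commute_iff: "bloch m x ** bloch n y = bloch n y ** bloch m x \<longleftrightarrow> x \<times> y = 0"
  by (simp add: M2_eq_iff complex_eq_iff cross3_def vec3_eq_iff) (auto simp: algebra_simps)

lemma jprod_bloch: "jprod (bloch m x) (bloch n y) = bloch (m * n + x \<bullet> y) (m *\<^sub>R y + n *\<^sub>R x)"
  by (simp add: jprod_def M2_eq_iff complex_eq_iff inner_vec3 field_simps)

lemma bloch_square: "bloch m x ** bloch m x = bloch (m\<^sup>2 + (norm x)\<^sup>2) ((2 * m) *\<^sub>R x)"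
  unfolding power2_norm_vec3 by (simp add: M2_eq_iff complex_eq_iff algebra_simps power2_eq_square)

lemma binary_quadratic_form_nonneg:
  fixes p q c r s :: real
  assumes "0 \<le> p" "0 \<le> q" "c\<^sup>2 \<le> p * q"
  shows "0 \<le> p * r\<^sup>2 + q * s\<^sup>2 - 2 * c * r * s"
proof (cases "p = 0")
  case True
  then show ?thesis using assms by simp
next
  case False
  have "p * (p * r\<^sup>2 + q * s\<^sup>2 - 2 * c * r * s) = (p * r - c * s)\<^sup>2 + (p * q - c\<^sup>2) * s\<^sup>2"
    by (simp add: power2_eq_square algebra_simps)
  also have "\<dots> \<ge> 0" using assms by simp
  finally show ?thesis using False assms(1) by (simp add: zero_le_mult_iff)
qed

lemma hermitian_form_nonneg_iff:
  fixes p q :: real and z :: complex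
  shows "(\<forall>v w. 0 \<le> p * (cmod v)\<^sup>2 + q * (cmod w)\<^sup>2 + 2 * Re (cnj v * z * w)) \<longleftrightarrow>
    0 \<le> p \<and> 0 \<le> q \<and> (cmod z)\<^sup>2 \<le> p * q"
proof
  assume nonneg: "\<forall>v w. 0 \<le> p * (cmod v)\<^sup>2 + q * (cmod w)\<^sup>2 + 2 * Re (cnj v * z * w)"
  have p: "0 \<le> p" and q: "0 \<le> q" using nonneg[rule_format, of 1 0] nonneg[rule_format, of 0 1] by simp_all
  have "0 \<le> p * (p * q - (cmod z)\<^sup>2)"
    using nonneg[rule_format, of "- z" p] unfolding cmod_power2 by (simp add: power2_eq_square algebra_simps)
  moreover have "0 \<le> q * (p * q - (cmod z)\<^sup>2)"
    using nonneg[rule_format, of q "- cnj z"] unfolding cmod_power2 by (simp add: power2_eq_square algebra_simps)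
  ultimately have sum: "0 \<le> (p + q) * (p * q - (cmod z)\<^sup>2)" by (simp add: distrib_right)
  show "0 \<le> p \<and> 0 \<le> q \<and> (cmod z)\<^sup>2 \<le> p * q"
  proof (cases "p + q = 0")
    case True
    then have "p = 0" "q = 0" using p q by simp_all
    moreover have "0 \<le> - 2 * (cmod z)\<^sup>2"
      using nonneg[rule_format, of 1 "- cnj z"] \<open>p = 0\<close> \<open>q = 0\<close>
      unfolding cmod_power2 by (simp add: power2_eq_square)
    ultimately show ?thesis by simp
  next
    case False
    then show ?thesis using sum p q by (simp add: zero_le_mult_iff)
  qed
next
  assume pqz: "0 \<le> p \<and> 0 \<le> q \<and> (cmod z)\<^sup>2 \<le> p * q"
  show "\<forall>v w. 0 \<le> p * (cmod v)\<^sup>2 + q * (cmod w)\<^sup>2 + 2 * Re (cnj v * z * w)"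
  proof (intro allI)
    fix v w
    have "- (cmod v * cmod z * cmod w) \<le> Re (cnj v * z * w)"
      using abs_Re_le_cmod[of "cnj v * z * w"] unfolding norm_mult complex_mod_cnj by linarith
    moreover have "0 \<le> p * (cmod v)\<^sup>2 + q * (cmod w)\<^sup>2 - 2 * cmod z * cmod v * cmod w"
      using pqz by (intro binary_quadratic_form_nonneg) auto
    ultimately show "0 \<le> p * (cmod v)\<^sup>2 + q * (cmod w)\<^sup>2 + 2 * Re (cnj v * z * w)"
      by (simp only: mult_ac)
  qed
qed

lemma quadratic_form_bloch:
  "(\<Sum>i\<in>UNIV. \<Sum>j\<in>UNIV. cnj (v $ i) * bloch m x $ i $ j * v $ j) =
    of_real ((m + x$3) * (cmod (v$1))\<^sup>2 + (m - x$3) * (cmod (v$2))\<^sup>2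
      + 2 * Re (cnj (v$1) * Complex (x$1) (- x$2) * v$2))"
  unfolding cmod_power2 by (simp add: sum_2 complex_eq_iff power2_eq_square algebra_simps)

lemma psd_bloch_iff: "psd (bloch m x) \<longleftrightarrow> norm x \<le> m"
proof -
  have "psd (bloch m x) \<longleftrightarrow> (\<forall>v w. 0 \<le> (m + x$3) * (cmod v)\<^sup>2 + (m - x$3) * (cmod w)\<^sup>2
      + 2 * Re (cnj v * Complex (x$1) (- x$2) * w))"
  proof -
    have "(\<forall>v::complex^2. P (v$1) (v$2)) \<longleftrightarrow> (\<forall>v w. P v w)" for P
      by (metis (mono_tags) vector_2)
    then show ?thesis
      unfolding psd_def quadratic_form_bloch by (simp add: hermitian_bloch less_eq_complex_def)
  qed
  also have "\<dots> \<longleftrightarrow> 0 \<le> m + x$3 \<and> 0 \<le> m - x$3 \<and> (x$1)\<^sup>2 + (x$2)\<^sup>2 \<le> (m + x$3) * (m - x$3)"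
    unfolding hermitian_form_nonneg_iff by (simp add: cmod_power2)
  also have "\<dots> \<longleftrightarrow> norm x \<le> m"
  proof
    assume "0 \<le> m + x$3 \<and> 0 \<le> m - x$3 \<and> (x$1)\<^sup>2 + (x$2)\<^sup>2 \<le> (m + x$3) * (m - x$3)"
    moreover have "(norm x)\<^sup>2 = (x$1)\<^sup>2 + (x$2)\<^sup>2 + (x$3)\<^sup>2" by (rule power2_norm_vec3)
    ultimately have "(norm x)\<^sup>2 \<le> m\<^sup>2" "0 \<le> m" by (simp_all add: power2_eq_square algebra_simps)
    then show "norm x \<le> m" by (rule power2_le_imp_le)
  next
    assume le: "norm x \<le> m"
    have "\<bar>x$3\<bar> \<le> norm x" by (rule component_le_norm_cart)
    moreover have "(norm x)\<^sup>2 \<le> m\<^sup>2" using le by (simp add: power_mono)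
    ultimately show "0 \<le> m + x$3 \<and> 0 \<le> m - x$3 \<and> (x$1)\<^sup>2 + (x$2)\<^sup>2 \<le> (m + x$3) * (m - x$3)"
      using le unfolding power2_norm_vec3 by (auto simp: power2_eq_square algebra_simps)
  qed
  finally show ?thesis .
qed

lemma effect_bloch_iff: "effect (bloch m x) \<longleftrightarrow> norm x \<le> m \<and> norm x \<le> 1 - m"
  by (simp add: effect_def mat_1_eq_bloch bloch_diff psd_bloch_iff)

lemma idempotent_mult_fix:
  fixes p q :: "'a::comm_semiring_1^'n^'n"
  assumes "p ** p = p" "range ((*v) q) \<subseteq> range ((*v) p)"
  shows "p ** q = q"
proof (rule matrix_eq[THEN iffD2], rule allI)
  fix v
  obtain u where u: "q *v v = p *v u" using assms(2) by blast
  have "(p ** q) *v v = (p ** p) *v u" by (simp add: u matrix_vector_mul_assoc[symmetric])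
  then show "(p ** q) *v v = q *v v" by (simp add: assms(1) u)
qed

lemma adj_mult: "adj (A ** B) = adj B ** adj A"
  by (simp add: adj_def M2_eq_iff mult.commute)

lemma rproj_eqI:
  assumes "p ** p = p" "hermitian p" "range ((*v) p) = range ((*v) x)"
  shows "rproj x = p"
  unfolding rproj_def
proof (rule the_equality)
  fix q assume q: "q ** q = q \<and> hermitian q \<and> range ((*v) q) = range ((*v) x)"
  have "q = adj (p ** q)" using idempotent_mult_fix[of p q] q assms by (simp add: hermitian_def)
  also have "\<dots> = q ** p" using q assms by (simp add: adj_mult hermitian_def)
  also have "\<dots> = p" using idempotent_mult_fix[of q p] q assms by simp
  finally show "q = p" .
qed (use assms in simp)

lemma surj_matrix_vector_mult_iff_det:
  fixes A :: "'a::field^'n^'n"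
  shows "surj ((*v) A) \<longleftrightarrow> det A \<noteq> 0"
  using matrix_right_invertible_surjective[of A] invertible_right_inverse[of A] invertible_det_nz[of A]
  by simp

lemma range_scaleR_matrix:
  fixes A :: "complex^'n^'m"
  assumes "r \<noteq> 0"
  shows "range ((*v) (r *\<^sub>R A)) = range ((*v) A)"
proof
  have scale: "(c *\<^sub>R A) *v v = A *v (c *\<^sub>R v)" for c v
    by (simp add: vec_eq_iff matrix_vector_mult_def scaleR_sum_right)
  then show "range ((*v) (r *\<^sub>R A)) \<subseteq> range ((*v) A)" by auto
  show "range ((*v) A) \<subseteq> range ((*v) (r *\<^sub>R A))"
  proof
    fix y assume "y \<in> range ((*v) A)"
    then obtain v where "y = A *v v" by blast
    then have "y = (r *\<^sub>R A) *v (inverse r *\<^sub>R v)" using assms by (simp add: scale)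
    then show "y \<in> range ((*v) (r *\<^sub>R A))" by blast
  qed
qed

lemma mat_1_range_projection:
  "mat 1 ** mat 1 = (mat 1 :: M2)" "hermitian (mat 1 :: M2)" "range ((*v) (mat 1 :: M2)) = UNIV"
proof -
  show "mat 1 ** mat 1 = (mat 1 :: M2)" by (rule matrix_mul_lid)
  show "hermitian (mat 1 :: M2)" unfolding mat_1_eq_bloch by (rule hermitian_bloch)
  show "range ((*v) (mat 1 :: M2)) = UNIV" by (metis matrix_vector_mul_lid surjI)
qed

lemma hermitian_range_projection_exists:
  assumes "hermitian h"
  obtains p where "p ** p = p" "hermitian p" "range ((*v) p) = range ((*v) h)"
proof -
  obtain m x where h: "h = bloch m x" using hermitian_imp_bloch assms .
  show thesis
  proof (cases "det h = 0")
    case False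
    then show thesis
      using that mat_1_range_projection surj_matrix_vector_mult_iff_det[of h] by metis
  next
    case True
    then have norm_x: "(norm x)\<^sup>2 = m\<^sup>2" unfolding h det_bloch of_real_eq_0_iff by simp
    show thesis
    proof (cases "m = 0")
      case True
      then have "h = 0" using norm_x by (simp add: h zero_eq_bloch bloch_eq_iff)
      then show thesis using that[of 0] hermitian_bloch[of 0 0] by (simp add: zero_eq_bloch[symmetric])
    next
      case False
      \<comment> \<open>the eigenvalues of h are 0 and 2 m\<close>
      let ?p = "(1 / (2 * m)) *\<^sub>R h"
      have "?p ** ?p = ?p"
        using False norm_x by (simp add: h scaleR_bloch bloch_square bloch_eq_iff field_simps power2_eq_square)
      moreover have "range ((*v) ?p) = range ((*v) h)" using False by (simp add: range_scaleR_matrix)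
      ultimately show thesis using that by (simp add: h scaleR_bloch hermitian_bloch)
    qed
  qed
qed

lemma rproj_eq_mat_1_iff:
  assumes "hermitian h"
  shows "rproj h = mat 1 \<longleftrightarrow> det h \<noteq> 0"
proof
  assume "rproj h = mat 1"
  moreover obtain p where p: "p ** p = p" "hermitian p" "range ((*v) p) = range ((*v) h)"
    using hermitian_range_projection_exists assms .
  ultimately have "surj ((*v) h)" using rproj_eqI[OF p] mat_1_range_projection(3) by simp
  then show "det h \<noteq> 0" by (simp add: surj_matrix_vector_mult_iff_det)
next
  assume "det h \<noteq> 0"
  then have "range ((*v) (mat 1 :: M2)) = range ((*v) h)"
    by (metis mat_1_range_projection(3) surj_matrix_vector_mult_iff_det)
  then show "rproj h = mat 1" using rproj_eqI mat_1_range_projection(1,2) by blast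
qed

lemma strict_iff_det: "strict a \<longleftrightarrow> effect a \<and> det a \<noteq> 0 \<and> det (mat 1 - a) \<noteq> 0"
proof (cases "effect a")
  case True
  then have "hermitian a" "hermitian (mat 1 - a)" by (simp_all add: effect_def psd_def)
  then have "sproj a = 0 \<longleftrightarrow> det (mat 1 - a) \<noteq> 0" "nproj a = 0 \<longleftrightarrow> det a \<noteq> 0"
    unfolding sproj_def nproj_def right_minus_eq by (metis rproj_eq_mat_1_iff)+
  moreover have "det (0 :: M2) = 0" by (simp add: zero_eq_bloch det_bloch)
  ultimately show ?thesis using True unfolding strict_def by metis
qed (simp add: strict_def)

lemma strict_bloch_iff: "strict (bloch m x) \<longleftrightarrow> norm x < m \<and> norm x < 1 - m"
proof -
  have nonzero_iff: "c\<^sup>2 - (norm x)\<^sup>2 \<noteq> 0 \<longleftrightarrow> norm x < c" if "norm x \<le> c" for c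
  proof -
    have "0 \<le> c" using that norm_ge_zero order_trans by blast
    then show ?thesis using that by auto
  qed
  show ?thesis
    unfolding strict_iff_det effect_bloch_iff mat_1_eq_bloch bloch_diff det_bloch of_real_eq_0_iff
    using nonzero_iff[of m] nonzero_iff[of "1 - m"] by auto
qed

lemma bloch_psd_square_inj:
  assumes "norm y \<le> n" "norm z \<le> l" "bloch n y ** bloch n y = bloch l z ** bloch l z"
  shows "n = l \<and> y = z"
proof -
  have sum: "n\<^sup>2 + (norm y)\<^sup>2 = l\<^sup>2 + (norm z)\<^sup>2" and "(2 * n) *\<^sub>R y = (2 * l) *\<^sub>R z"
    using assms(3) by (simp_all add: bloch_square bloch_eq_iff)
  then have prod: "n *\<^sub>R y = l *\<^sub>R z" by (metis (full_types) scaleR_scaleR scaleR_cancel_left zero_neq_numeral)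
  have prod_norm: "n\<^sup>2 * (norm y)\<^sup>2 = l\<^sup>2 * (norm z)\<^sup>2"
    using arg_cong[OF prod, of "\<lambda>v. (norm v)\<^sup>2"] by (simp add: power_mult_distrib)
  have "(n\<^sup>2 - (norm y)\<^sup>2)\<^sup>2 = (n\<^sup>2 + (norm y)\<^sup>2)\<^sup>2 - 4 * (n\<^sup>2 * (norm y)\<^sup>2)" by algebra
  also have "\<dots> = (l\<^sup>2 + (norm z)\<^sup>2)\<^sup>2 - 4 * (l\<^sup>2 * (norm z)\<^sup>2)" by (simp only: sum prod_norm)
  also have "\<dots> = (l\<^sup>2 - (norm z)\<^sup>2)\<^sup>2" by algebra
  finally have "(n\<^sup>2 - (norm y)\<^sup>2)\<^sup>2 = (l\<^sup>2 - (norm z)\<^sup>2)\<^sup>2" .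
  moreover have "(norm y)\<^sup>2 \<le> n\<^sup>2" "(norm z)\<^sup>2 \<le> l\<^sup>2"
    using assms(1,2) by (simp_all add: power_mono)
  ultimately have "n\<^sup>2 - (norm y)\<^sup>2 = l\<^sup>2 - (norm z)\<^sup>2" by simp
  then have "n\<^sup>2 = l\<^sup>2" using sum by simp
  moreover have "0 \<le> n" "0 \<le> l" using assms(1,2) norm_ge_zero order_trans by blast+
  ultimately have "n = l" by simp
  moreover have "y = z"
  proof (cases "n = 0")
    case True
    then show ?thesis using assms(1,2) \<open>n = l\<close> by simp
  next
    case False
    then show ?thesis using prod \<open>n = l\<close> by simp
  qed
  ultimately show ?thesis ..
qed

text \<open>The eigenvalues of \<open>bloch m x\<close> are \<open>m \<plusminus> norm x\<close>, so its absolute value has scalar part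
  \<open>max \<bar>m\<bar> (norm x)\<close>.  When that maximum is 0, the junk value \<open>m / 0 = 0\<close> is harmless since \<open>x = 0\<close>.\<close>

lemma mabs_bloch:
  fixes m :: real and x :: "real^3"
  defines "M \<equiv> max \<bar>m\<bar> (norm x)"
  shows "mabs (bloch m x) = bloch M ((m / M) *\<^sub>R x)"
proof -
  have M_ge: "\<bar>m\<bar> \<le> M" "norm x \<le> M" unfolding M_def by simp_all
  have M_eq: "(M\<^sup>2 - m\<^sup>2) * (M\<^sup>2 - (norm x)\<^sup>2) = 0" unfolding M_def max_def by simp
  have cand_psd: "norm ((m / M) *\<^sub>R x) \<le> M"
  proof (cases "M = 0")
    case False
    then have M_pos: "0 < M" using M_ge by linarith
    have "norm ((m / M) *\<^sub>R x) = \<bar>m\<bar> * norm x / M" using M_pos by simp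
    also have "\<dots> \<le> M" using M_ge M_pos by (simp add: pos_divide_le_eq mult_mono)
    finally show ?thesis .
  qed (use M_ge in simp)
  have cand_square: "bloch M ((m / M) *\<^sub>R x) ** bloch M ((m / M) *\<^sub>R x) = adj (bloch m x) ** bloch m x"
  proof (cases "M = 0")
    case True
    then show ?thesis using M_ge by (simp add: adj_bloch)
  next
    case False
    have "M\<^sup>2 * (M\<^sup>2 + (m / M)\<^sup>2 * (norm x)\<^sup>2) = M\<^sup>2 * (m\<^sup>2 + (norm x)\<^sup>2)"
      using False M_eq by (simp add: field_simps power2_eq_square)
    then have "M\<^sup>2 + (m / M)\<^sup>2 * (norm x)\<^sup>2 = m\<^sup>2 + (norm x)\<^sup>2" using False by simp
    then show ?thesis
      using False by (simp add: adj_bloch bloch_square bloch_eq_iff power_mult_distrib power_divide)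
  qed
  show ?thesis
    unfolding mabs_def
  proof (rule the_equality)
    fix h assume h: "psd h \<and> h ** h = adj (bloch m x) ** bloch m x"
    then obtain n y where h_eq: "h = bloch n y" using hermitian_imp_bloch psd_def by blast
    then have "norm y \<le> n" "bloch n y ** bloch n y = bloch M ((m / M) *\<^sub>R x) ** bloch M ((m / M) *\<^sub>R x)"
      using h cand_square by (simp_all add: psd_bloch_iff)
    then have "n = M \<and> y = (m / M) *\<^sub>R x" by (rule bloch_psd_square_inj[OF _ cand_psd])
    then show "h = bloch M ((m / M) *\<^sub>R x)" using h_eq by simp
  qed (simp only: psd_bloch_iff cand_psd cand_square)
qed

lemma det_bloch_pos_iff:
  assumes "0 \<le> m"
  shows "0 < det (bloch m x) \<longleftrightarrow> norm x < m"
proof -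
  have "(norm x)\<^sup>2 < m\<^sup>2 \<longleftrightarrow> norm x < m"
    using assms by (auto intro: power_strict_mono dest: power_less_imp_less_base)
  then show ?thesis by (simp add: det_bloch less_complex_def)
qed

lemma divide_max_abs_eq_0_iff: "(m / max \<bar>m\<bar> r = 0) \<longleftrightarrow> m = (0::real)"
  by (auto simp: max_def)

lemma abs_compatible_bloch_iff:
  assumes "x \<times> y \<noteq> 0"
  shows "abs_compatible (bloch s x) (bloch t y) \<longleftrightarrow>
    s = 1/2 \<and> t = 1/2 \<and> norm (x - y) + norm (x + y) = 1"
proof -
  define M\<^sub>1 where "M\<^sub>1 = max \<bar>s - t\<bar> (norm (x - y))"
  define M\<^sub>2 where "M\<^sub>2 = max \<bar>1 - s - t\<bar> (norm (x + y))"
  define k\<^sub>1 where "k\<^sub>1 = (s - t) / M\<^sub>1"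
  define k\<^sub>2 where "k\<^sub>2 = (1 - s - t) / M\<^sub>2"
  have one_minus: "mat 1 - bloch s x - bloch t y = bloch (1 - s - t) (- (x + y))"
    by (simp add: mat_1_eq_bloch bloch_diff)
  have "abs_compatible (bloch s x) (bloch t y) \<longleftrightarrow>
      M\<^sub>1 + M\<^sub>2 = 1 \<and> k\<^sub>1 *\<^sub>R (x - y) = k\<^sub>2 *\<^sub>R (x + y)"
    unfolding abs_compatible_def one_minus bloch_diff mabs_bloch norm_minus_cancel
    by (simp add: M\<^sub>1_def M\<^sub>2_def k\<^sub>1_def k\<^sub>2_def bloch_add mat_1_eq_bloch bloch_eq_iff algebra_simps)
  also have "\<dots> \<longleftrightarrow> s = 1/2 \<and> t = 1/2 \<and> norm (x - y) + norm (x + y) = 1"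
  proof
    assume compat: "M\<^sub>1 + M\<^sub>2 = 1 \<and> k\<^sub>1 *\<^sub>R (x - y) = k\<^sub>2 *\<^sub>R (x + y)"
    have "k\<^sub>1 *\<^sub>R (x \<times> y) = k\<^sub>2 *\<^sub>R (x \<times> y)"
      using arg_cong[OF conjunct2[OF compat], of "\<lambda>v. v \<times> y"]
      by (simp add: cross_mult_left Cross3.left_diff_distrib cross_add_left)
    moreover have "- k\<^sub>1 *\<^sub>R (x \<times> y) = k\<^sub>2 *\<^sub>R (x \<times> y)"
      using arg_cong[OF conjunct2[OF compat], of "\<lambda>v. x \<times> v"]
      by (simp add: cross_mult_right Cross3.right_diff_distrib cross_add_right)
    ultimately have "k\<^sub>1 = 0" "k\<^sub>2 = 0" using assms by (metis scaleR_cancel_right neg_equal_zero)+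
    then have "s - t = 0" "1 - s - t = 0"
      unfolding k\<^sub>1_def k\<^sub>2_def M\<^sub>1_def M\<^sub>2_def divide_max_abs_eq_0_iff by simp_all
    then show "s = 1/2 \<and> t = 1/2 \<and> norm (x - y) + norm (x + y) = 1"
      using compat by (simp add: M\<^sub>1_def M\<^sub>2_def)
  next
    assume "s = 1/2 \<and> t = 1/2 \<and> norm (x - y) + norm (x + y) = 1"
    then have "s - t = 0" "1 - s - t = 0" "norm (x - y) + norm (x + y) = 1" by simp_all
    then show "M\<^sub>1 + M\<^sub>2 = 1 \<and> k\<^sub>1 *\<^sub>R (x - y) = k\<^sub>2 *\<^sub>R (x + y)"
      unfolding M\<^sub>1_def M\<^sub>2_def k\<^sub>1_def k\<^sub>2_def by simp
  qed
  finally show ?thesis .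
qed

lemma norm_diff_add_norm_add_eq_1_iff:
  fixes x y :: "'a::real_inner"
  assumes "norm x < 1/2" "norm y < 1/2"
  shows "norm (x - y) + norm (x + y) = 1 \<longleftrightarrow> (1 + 4 * (x \<bullet> y))\<^sup>2 = (2 * norm (x + y))\<^sup>2"
proof -
  define u w where "u = norm (x + y)" and "w = norm (x - y)"
  have polar: "4 * (x \<bullet> y) = u\<^sup>2 - w\<^sup>2"
    unfolding u_def w_def power2_norm_eq_inner by (simp add: inner_add inner_diff inner_commute)
  have "u\<^sup>2 + w\<^sup>2 = 2 * (norm x)\<^sup>2 + 2 * (norm y)\<^sup>2"
    unfolding u_def w_def power2_norm_eq_inner by (simp add: inner_add inner_diff inner_commute)
  also have "\<dots> < 1"
    using assms power_strict_mono[of "norm x" "1/2" 2] power_strict_mono[of "norm y" "1/2" 2]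
    by (simp add: power2_eq_square)
  finally have "u < 1" "w < 1" using u_def w_def by (smt (verit) norm_ge_zero one_le_power zero_le_power2)+
  moreover have "0 \<le> u" "0 \<le> w" by (simp_all add: u_def w_def)
  ultimately have "0 < (1 - u + w) * (1 + u - w) * (1 + u + w)" by simp
  moreover have "(1 + 4 * (x \<bullet> y))\<^sup>2 - (2 * u)\<^sup>2 = (1 - u - w) * ((1 - u + w) * (1 + u - w) * (1 + u + w))"
    unfolding polar by algebra
  ultimately have "(1 + 4 * (x \<bullet> y))\<^sup>2 = (2 * u)\<^sup>2 \<longleftrightarrow> 1 - u - w = 0"
    by (metis eq_iff_diff_eq_0 mult_eq_0_iff less_irrefl)
  then show ?thesis by (auto simp: u_def w_def)
qed

lemma abs_inner_less_if_norm_diff_add_norm_add_eq_1: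
  fixes x y :: "'a::real_inner"
  assumes "norm x < 1/2" "norm y < 1/2" "norm (x - y) + norm (x + y) = 1"
  shows "\<bar>x \<bullet> y\<bar> < norm x * norm y"
proof (rule ccontr)
  define u w where "u = norm (x + y)" and "w = norm (x - y)"
  define A B where "A = (norm x)\<^sup>2" and "B = (norm y)\<^sup>2"
  assume "\<not> \<bar>x \<bullet> y\<bar> < norm x * norm y"
  then have "\<bar>x \<bullet> y\<bar> = norm x * norm y" using Cauchy_Schwarz_ineq2[of x y] by linarith
  then have "(x \<bullet> y)\<^sup>2 = A * B" unfolding A_def B_def by (metis power2_abs power_mult_distrib)
  have u2: "u\<^sup>2 = A + B + 2 * (x \<bullet> y)" and w2: "w\<^sup>2 = A + B - 2 * (x \<bullet> y)"
    unfolding u_def w_def A_def B_def power2_norm_eq_inner by (simp_all add: inner_add inner_diff inner_commute)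
  have "(u * w)\<^sup>2 = (A - B)\<^sup>2"
    unfolding power_mult_distrib u2 w2 using \<open>(x \<bullet> y)\<^sup>2 = A * B\<close> by algebra
  then have "(u * w)\<^sup>2 = \<bar>A - B\<bar>\<^sup>2" by simp
  then have "u * w = \<bar>A - B\<bar>" by (rule power2_eq_imp_eq) (simp_all add: u_def w_def)
  then have "(u + w)\<^sup>2 = 2 * A + 2 * B + 2 * \<bar>A - B\<bar>" by (simp add: power2_sum u2 w2)
  also have "\<dots> < 1"
    using assms(1,2) power_strict_mono[of "norm x" "1/2" 2] power_strict_mono[of "norm y" "1/2" 2]
    by (simp add: A_def B_def power2_eq_square abs_if)
  finally show False using assms(3) by (simp add: u_def w_def add.commute)
qed

lemma cross_neq_0_if_norm_diff_add_norm_add_eq_1: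
  assumes "norm x < 1/2" "norm y < 1/2" "norm (x - y) + norm (x + y) = 1"
  shows "x \<times> y \<noteq> 0"
proof
  assume "x \<times> y = 0"
  then have "\<bar>x \<bullet> y\<bar>\<^sup>2 = (norm x * norm y)\<^sup>2" using norm_cross_dot[of x y] by simp
  then have "\<bar>x \<bullet> y\<bar> = norm x * norm y" by (rule power2_eq_imp_eq) simp_all
  then show False using abs_inner_less_if_norm_diff_add_norm_add_eq_1[OF assms] by simp
qed

lemma abs_compatible_noncommuting_bloch_iff:
  assumes "norm x < 1/2" "norm y < 1/2"
  shows "abs_compatible (bloch s x) (bloch t y) \<and> x \<times> y \<noteq> 0 \<longleftrightarrow>
    s = 1/2 \<and> t = 1/2 \<and> norm (x - y) + norm (x + y) = 1"
  using abs_compatible_bloch_iff cross_neq_0_if_norm_diff_add_norm_add_eq_1[OF assms] by blast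

lemma det_jprod_bloch_half_eq_0_iff:
  assumes "norm x < 1/2" "norm y < 1/2"
  shows "det (jprod (bloch (1/2) x) (bloch (1/2) y)) = 0 \<longleftrightarrow> norm (x - y) + norm (x + y) = 1"
proof -
  have "jprod (bloch (1/2) x) (bloch (1/2) y) = bloch ((1 + 4 * (x \<bullet> y)) / 4) ((1/2) *\<^sub>R (x + y))"
    by (simp add: jprod_bloch bloch_eq_iff scaleR_add_right add.commute)
  then have "det (jprod (bloch (1/2) x) (bloch (1/2) y)) =
      of_real (((1 + 4 * (x \<bullet> y))\<^sup>2 - (2 * norm (x + y))\<^sup>2) / 16)"
    by (simp add: det_bloch power_divide power_mult_distrib diff_divide_distrib)
  then show ?thesis
    using norm_diff_add_norm_add_eq_1_iff[OF assms] by (simp only: of_real_eq_0_iff) simp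
qed

lemma det_pos_trace_1_bloch_iff:
  "0 < det (bloch s x) \<and> trace (bloch s x) = 1 \<longleftrightarrow> s = 1/2 \<and> norm x < 1/2"
proof (cases "s = 1/2")
  case True
  have "0 < det (bloch (1/2) x) \<longleftrightarrow> norm x < 1/2" by (rule det_bloch_pos_iff) simp
  then show ?thesis unfolding True by (simp add: trace_bloch)
next
  case False
  then have "trace (bloch s x) \<noteq> 1" by (simp add: trace_bloch complex_eq_iff)
  then show ?thesis using False by simp
qed

theorem theorem3p3:
  fixes a b :: M2
  assumes "effect a" "effect b"
    and "a \<noteq> 0" "a \<noteq> mat 1" "b \<noteq> 0" "b \<noteq> mat 1"
  shows "(strict a \<and> strict b \<and> abs_compatible a b \<and> a ** b \<noteq> b ** a) \<longleftrightarrow>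
         (0 < det a \<and> 0 < det b \<and> trace a = 1 \<and> trace b = 1 \<and> det (jprod a b) = 0)"
proof -
  obtain s x where a: "a = bloch s x" using assms(1) hermitian_imp_bloch by (auto simp: effect_def psd_def)
  obtain t y where b: "b = bloch t y" using assms(2) hermitian_imp_bloch by (auto simp: effect_def psd_def)
  let ?P = "s = 1/2 \<and> t = 1/2 \<and> norm x < 1/2 \<and> norm y < 1/2 \<and> norm (x - y) + norm (x + y) = 1"
  have "strict a \<and> strict b \<and> abs_compatible a b \<and> a ** b \<noteq> b ** a \<longleftrightarrow> ?P"
    unfolding a b strict_bloch_iff bloch_commute_iff
    using abs_compatible_noncommuting_bloch_iff[of x y s t] by auto
  moreover have "0 < det a \<and> 0 < det b \<and> trace a = 1 \<and> trace b = 1 \<and> det (jprod a b) = 0 \<longleftrightarrow> ?P"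
  proof (cases "s = 1/2 \<and> t = 1/2")
    case True
    then have s: "s = 1/2" and t: "t = 1/2" by simp_all
    show ?thesis
      using det_pos_trace_1_bloch_iff[of s x] det_pos_trace_1_bloch_iff[of t y]
        det_jprod_bloch_half_eq_0_iff[of x y]
      unfolding a b s t by auto
  next
    case False
    then show ?thesis using det_pos_trace_1_bloch_iff[of s x] det_pos_trace_1_bloch_iff[of t y]
      unfolding a b by auto
  qed
  ultimately show ?thesis by simp
qed

end
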